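(* The asymptotic existential $L_{\mathrm{rings}}$-theory of $\{\mathbb{F}_p[t]/(t^n):n\in\mathbb{N}\}$ equals the existential $L_{\mathrm{rings}}$-theory of the ring $\mathbb{F}_p[t^{1/\infty}]/(t)$.
   Context: $\mathbb{F}_p[t^{1/\infty}]=\varinjlim_n\mathbb{F}_p[t^{1/n}]$ is the direct limit of the polynomial rings $\mathbb{F}_p[t^{1/n}]$, ordered by divisibility of $n$, along the natural inclusions $\mathbb{F}_p[t^{1/n}]\hookrightarrow\mathbb{F}_p[t^{1/m}]$ for $n\mid m$. The ring $\mathbb{F}_p[t^{1/\infty}]/(t)$ is its quotient by the ideal generated by $t$. The asymptotic existential theory of a class is the set of existential sentences true in all but finitely many members. *)

theory Defs
  imports "HOL-Algebra.Algebra" "HOL-Number_Theory.Residues"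
begin

datatype tm = TVar nat | TZero | TOne | TAdd tm tm | TNeg tm | TMul tm tm

datatype fm = FEq tm tm | FNot fm | FAnd fm fm | FOr fm fm
  | FEx nat fm | FAll nat fm

fun tvars :: "tm \<Rightarrow> nat set" where
  "tvars (TVar i) = {i}"
| "tvars TZero = {}"
| "tvars TOne = {}"
| "tvars (TAdd a b) = tvars a \<union> tvars b"
| "tvars (TNeg a) = tvars a"
| "tvars (TMul a b) = tvars a \<union> tvars b"

fun frees :: "fm \<Rightarrow> nat set" where
  "frees (FEq a b) = tvars a \<union> tvars b"
| "frees (FNot f) = frees f"
| "frees (FAnd f g) = frees f \<union> frees g"
| "frees (FOr f g) = frees f \<union> frees g"
| "frees (FEx x f) = frees f - {x}"
| "frees (FAll x f) = frees f - {x}"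

definition sentence :: "fm \<Rightarrow> bool" where
  "sentence f \<longleftrightarrow> frees f = {}"

fun qfree :: "fm \<Rightarrow> bool" where
  "qfree (FEq a b) = True"
| "qfree (FNot f) = qfree f"
| "qfree (FAnd f g) = (qfree f \<and> qfree g)"
| "qfree (FOr f g) = (qfree f \<and> qfree g)"
| "qfree (FEx x f) = False"
| "qfree (FAll x f) = False"

fun existential :: "fm \<Rightarrow> bool" where
  "existential (FEx x f) = existential f"
| "existential f = qfree f"

fun teval :: "('a, 'b) ring_scheme \<Rightarrow> (nat \<Rightarrow> 'a) \<Rightarrow> tm \<Rightarrow> 'a" where
  "teval R v (TVar i) = v i"
| "teval R v TZero = \<zero>\<^bsub>R\<^esub>"
| "teval R v TOne = \<one>\<^bsub>R\<^esub>"
| "teval R v (TAdd a b) = teval R v a \<oplus>\<^bsub>R\<^esub> teval R v b"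
| "teval R v (TNeg a) = \<ominus>\<^bsub>R\<^esub> teval R v a"
| "teval R v (TMul a b) = teval R v a \<otimes>\<^bsub>R\<^esub> teval R v b"

fun sat :: "('a, 'b) ring_scheme \<Rightarrow> (nat \<Rightarrow> 'a) \<Rightarrow> fm \<Rightarrow> bool" where
  "sat R v (FEq a b) = (teval R v a = teval R v b)"
| "sat R v (FNot f) = (\<not> sat R v f)"
| "sat R v (FAnd f g) = (sat R v f \<and> sat R v g)"
| "sat R v (FOr f g) = (sat R v f \<or> sat R v g)"
| "sat R v (FEx x f) = (\<exists>a\<in>carrier R. sat R (v(x := a)) f)"
| "sat R v (FAll x f) = (\<forall>a\<in>carrier R. sat R (v(x := a)) f)"

definition models :: "('a, 'b) ring_scheme \<Rightarrow> fm \<Rightarrow> bool" where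
  "models R f \<longleftrightarrow> (\<forall>v. range v \<subseteq> carrier R \<longrightarrow> sat R v f)"

definition exist_theory :: "('a, 'b) ring_scheme \<Rightarrow> fm set" where
  "exist_theory R = {f. sentence f \<and> existential f \<and> models R f}"

definition asymp_exist_theory :: "(nat \<Rightarrow> ('a, 'b) ring_scheme) \<Rightarrow> fm set" where
  "asymp_exist_theory A =
     {f. sentence f \<and> existential f \<and> finite {n. \<not> models (A n) f}}"

definition Fp_poly :: "nat \<Rightarrow> (int, nat \<Rightarrow> int) up_ring" where
  "Fp_poly p = UP (residue_ring (int p))"

definition Fp_trunc :: "nat \<Rightarrow> nat \<Rightarrow> (nat \<Rightarrow> int) set ring" where
  "Fp_trunc p n =
     Fp_poly p Quot (PIdl\<^bsub>Fp_poly p\<^esub> (monom (Fp_poly p) 1 n))"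

text \<open>F_p[t^{1/\<infinity>}] = direct limit of the F_p[t^{1/n}], realised as the
union of all F_p[t^{1/n}], i.e. the ring of finite sums of a_q t^q with
q \<in> Q, q \<ge> 0, a_q \<in> F_p (monoid algebra F_p[Q_{\<ge>0}]).  An element is
its coefficient function rat \<Rightarrow> F_p.\<close>
definition tinf_carrier :: "nat \<Rightarrow> (rat \<Rightarrow> int) set" where
  "tinf_carrier p = {f. finite {q. f q \<noteq> 0} \<and> (\<forall>q. f q \<noteq> 0 \<longrightarrow> q \<ge> 0)
                    \<and> (\<forall>q. f q \<in> {0..<int p})}"

definition tinf_mult :: "nat \<Rightarrow> (rat \<Rightarrow> int) \<Rightarrow> (rat \<Rightarrow> int) \<Rightarrow> (rat \<Rightarrow> int)" where
  "tinf_mult p f g = (\<lambda>q. (\<Sum>r\<in>{r. f r \<noteq> 0}. f r * g (q - r)) mod int p)"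

definition tinf_add :: "nat \<Rightarrow> (rat \<Rightarrow> int) \<Rightarrow> (rat \<Rightarrow> int) \<Rightarrow> (rat \<Rightarrow> int)" where
  "tinf_add p f g = (\<lambda>q. (f q + g q) mod int p)"

definition tinf_one :: "rat \<Rightarrow> int" where
  "tinf_one = (\<lambda>q. if q = 0 then 1 else 0)"

definition Fp_tinf :: "nat \<Rightarrow> (rat \<Rightarrow> int) ring" where
  "Fp_tinf p =
     \<lparr>carrier = tinf_carrier p,
      monoid.mult = tinf_mult p,
      one = tinf_one,
      ring.zero = (\<lambda>q. 0),
      ring.add = tinf_add p\<rparr>"

definition tvar_inf :: "rat \<Rightarrow> int" where
  "tvar_inf = (\<lambda>q. if q = 1 then 1 else 0)"

definition Fp_tinf_mod_t :: "nat \<Rightarrow> (rat \<Rightarrow> int) set ring" where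
  "Fp_tinf_mod_t p = Fp_tinf p Quot (PIdl\<^bsub>Fp_tinf p\<^esub> tvar_inf)"

end

theory Submission
  imports Defs
begin

text \<open>Let \<open>g\<close> and \<open>h\<close> be homomorphisms from a common ring \<open>C\<close> with the same
zero set. Then an existential sentence whose witnesses in the target of \<open>g\<close> can be lifted to
\<open>C\<close> also holds in the target of \<open>h\<close>. We take \<open>C = F_p[t]\<close>. The substitution
\<open>t \<mapsto> t^(k/n)\<close> followed by reduction modulo \<open>t\<close> has zero set
\<open>{f. f_j = 0 whenever jk < n}\<close>, and for \<open>k = 1\<close> this is also the kernel of
\<open>F_p[t] \<rightarrow> F_p[t]/(t^n)\<close>. Hence a sentence true in some \<open>F_p[t]/(t^n)\<close> holds in
\<open>F_p[t^(1/\<infinity>)]/(t)\<close>. Conversely, the finitely many witnesses of a sentence true in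
\<open>F_p[t^(1/\<infinity>)]/(t)\<close> lie in the image of \<open>t \<mapsto> t^(1/M)\<close> for a single \<open>M\<close>, and
for \<open>n > M\<^sup>2\<close> the number \<open>k = \<lceil>n/M\<rceil>\<close> satisfies \<open>jk < n \<longleftrightarrow> j < M\<close>. So
\<open>t^(1/M) \<mapsto> t^(k/n)\<close> moves the witnesses into the image of \<open>t \<mapsto> t^(1/n)\<close>,
which is a copy of \<open>F_p[t]/(t^n)\<close>.\<close>

section \<open>Transfer of existential sentences\<close>

fun sat_in :: "('a, 'b) ring_scheme \<Rightarrow> 'a set \<Rightarrow> (nat \<Rightarrow> 'a) \<Rightarrow> fm \<Rightarrow> bool" where
  "sat_in R S v (FEx x f) = (\<exists>a\<in>S. sat_in R S (v(x := a)) f)"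
| "sat_in R S v f = sat R v f"

lemma sat_eq_sat_in_carrier: "existential f \<Longrightarrow> sat R v f = sat_in R (carrier R) v f"
  by (induction f arbitrary: v) auto

lemma sat_in_mono: "S \<subseteq> S' \<Longrightarrow> sat_in R S v f \<Longrightarrow> sat_in R S' v f"
  by (induction f arbitrary: v) auto

lemma teval_cong: "\<forall>i\<in>tvars t. v i = w i \<Longrightarrow> teval R v t = teval R w t"
  by (induction t) auto

lemma sat_cong: "\<forall>i\<in>frees f. v i = w i \<Longrightarrow> sat R v f = sat R w f"
proof (induction f arbitrary: v w)
  case (FEq a b)
  then show ?case using teval_cong[of a v w R] teval_cong[of b v w R] by auto
next
  case (FEx x f)
  then have "\<And>a. sat R (v(x := a)) f = sat R (w(x := a)) f" by (intro FEx.IH) auto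
  then show ?case by simp
next
  case (FAll x f)
  then have "\<And>a. sat R (v(x := a)) f = sat R (w(x := a)) f" by (intro FAll.IH) auto
  then show ?case by simp
next
  case (FAnd f g)
  then have "sat R v f = sat R w f" "sat R v g = sat R w g" by (intro FAnd.IH; auto)+
  then show ?case by simp
next
  case (FOr f g)
  then have "sat R v f = sat R w f" "sat R v g = sat R w g" by (intro FOr.IH; auto)+
  then show ?case by simp
qed auto

lemma models_iff_sat_zero:
  assumes "sentence f" "ring R"
  shows "models R f \<longleftrightarrow> sat R (\<lambda>_. \<zero>\<^bsub>R\<^esub>) f"
proof -
  have "sat R v f = sat R (\<lambda>_. \<zero>\<^bsub>R\<^esub>) f" for v
    using assms(1) by (intro sat_cong) (auto simp: sentence_def)
  moreover have "range (\<lambda>_. \<zero>\<^bsub>R\<^esub>) \<subseteq> carrier R"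
    using ring.ring_simprules(2)[OF assms(2)] by auto
  ultimately show ?thesis unfolding models_def by blast
qed

lemma models_iff_sat_in_carrier:
  assumes "sentence f" "existential f" "ring R"
  shows "models R f \<longleftrightarrow> sat_in R (carrier R) (\<lambda>_. \<zero>\<^bsub>R\<^esub>) f"
  using models_iff_sat_zero[OF assms(1,3)] sat_eq_sat_in_carrier[OF assms(2)] by simp

lemma teval_ring_hom:
  assumes "ring_hom_ring C A g" "range u \<subseteq> carrier C"
  shows "teval C u t \<in> carrier C \<and> teval A (\<lambda>i. g (u i)) t = g (teval C u t)"
proof -
  interpret ring_hom_ring C A g by fact
  show ?thesis using assms(2) by (induction t) auto
qed

lemma qfree_sat_transfer:
  assumes g: "ring_hom_ring C A g" and h: "ring_hom_ring C B h"
    and ker: "\<forall>x\<in>carrier C. (g x = \<zero>\<^bsub>A\<^esub>) = (h x = \<zero>\<^bsub>B\<^esub>)"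
    and u: "range u \<subseteq> carrier C"
  shows "qfree f \<Longrightarrow> sat A (\<lambda>i. g (u i)) f = sat B (\<lambda>i. h (u i)) f"
proof (induction f)
  case (FEq a b)
  interpret G: ring_hom_ring C A g by fact
  interpret H: ring_hom_ring C B h by fact
  define x where "x = teval C u a"
  define y where "y = teval C u b"
  have xy: "x \<in> carrier C" "y \<in> carrier C" using teval_ring_hom[OF g u] x_def y_def by auto
  have "g (x \<ominus>\<^bsub>C\<^esub> y) = g x \<ominus>\<^bsub>A\<^esub> g y" "h (x \<ominus>\<^bsub>C\<^esub> y) = h x \<ominus>\<^bsub>B\<^esub> h y"
    using xy by (simp_all add: G.R.minus_eq G.S.minus_eq H.S.minus_eq)
  then have "g x = g y \<longleftrightarrow> g (x \<ominus>\<^bsub>C\<^esub> y) = \<zero>\<^bsub>A\<^esub>"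
    and "h (x \<ominus>\<^bsub>C\<^esub> y) = \<zero>\<^bsub>B\<^esub> \<longleftrightarrow> h x = h y"
    using xy G.S.r_right_minus_eq H.S.r_right_minus_eq by simp_all
  moreover have "g (x \<ominus>\<^bsub>C\<^esub> y) = \<zero>\<^bsub>A\<^esub> \<longleftrightarrow> h (x \<ominus>\<^bsub>C\<^esub> y) = \<zero>\<^bsub>B\<^esub>"
    using ker xy by simp
  ultimately have "g x = g y \<longleftrightarrow> h x = h y" by simp
  then show ?case using teval_ring_hom[OF g u] teval_ring_hom[OF h u] x_def y_def by simp
qed auto

lemma sat_in_transfer:
  assumes g: "ring_hom_ring C A g" and h: "ring_hom_ring C B h"
    and ker: "\<forall>x\<in>carrier C. (g x = \<zero>\<^bsub>A\<^esub>) = (h x = \<zero>\<^bsub>B\<^esub>)"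
    and lift: "\<forall>a\<in>SA. \<exists>c\<in>carrier C. g c = a \<and> h c \<in> SB"
  shows "existential f \<Longrightarrow> range u \<subseteq> carrier C \<Longrightarrow>
    sat_in A SA (\<lambda>i. g (u i)) f \<Longrightarrow> sat_in B SB (\<lambda>i. h (u i)) f"
proof (induction f arbitrary: u)
  case (FEx x f)
  from FEx.prems(3) obtain a where a: "a \<in> SA" "sat_in A SA ((\<lambda>i. g (u i))(x := a)) f"
    by (simp only: sat_in.simps) blast
  then obtain c where c: "c \<in> carrier C" "g c = a" "h c \<in> SB" using lift by blast
  have upd: "(\<lambda>i. g (u i))(x := a) = (\<lambda>i. g ((u(x := c)) i))"
    "(\<lambda>i. h (u i))(x := h c) = (\<lambda>i. h ((u(x := c)) i))"
    using c by auto
  have "range (u(x := c)) \<subseteq> carrier C" using FEx.prems c by auto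
  then have "sat_in B SB (\<lambda>i. h ((u(x := c)) i)) f"
    using FEx.IH FEx.prems(1) a(2) upd by (simp add: fun_upd_def)
  then show ?case using c upd by (auto intro!: bexI[of _ "h c"])
qed (simp_all add: qfree_sat_transfer[OF g h ker] del: sat.simps)

corollary sat_in_transfer_zero:
  assumes g: "ring_hom_ring C A g" and h: "ring_hom_ring C B h"
    and ker: "\<forall>x\<in>carrier C. (g x = \<zero>\<^bsub>A\<^esub>) = (h x = \<zero>\<^bsub>B\<^esub>)"
    and lift: "\<forall>a\<in>SA. \<exists>c\<in>carrier C. g c = a \<and> h c \<in> SB"
    and "existential f" "sat_in A SA (\<lambda>_. \<zero>\<^bsub>A\<^esub>) f"
  shows "sat_in B SB (\<lambda>_. \<zero>\<^bsub>B\<^esub>) f"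
proof -
  interpret G: ring_hom_ring C A g by fact
  interpret H: ring_hom_ring C B h by fact
  have "sat_in B SB (\<lambda>i. h ((\<lambda>_. \<zero>\<^bsub>C\<^esub>) i)) f"
    by (rule sat_in_transfer[OF g h ker lift]) (use assms in simp_all)
  then show ?thesis by simp
qed

lemma sat_in_directed_union:
  assumes "i0 \<in> I"
    and cover: "\<And>a. a \<in> carrier A \<Longrightarrow> \<exists>i\<in>I. a \<in> S i"
    and directed: "\<And>i j. i \<in> I \<Longrightarrow> j \<in> I \<Longrightarrow> \<exists>k\<in>I. S i \<union> S j \<subseteq> S k"
  shows "existential f \<Longrightarrow> sat A v f \<Longrightarrow> \<exists>i\<in>I. sat_in A (S i) v f"
proof (induction f arbitrary: v)
  case (FEx x f)
  then obtain a where a: "a \<in> carrier A" "sat A (v(x := a)) f" by auto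
  with FEx obtain i where i: "i \<in> I" "sat_in A (S i) (v(x := a)) f" by auto
  obtain j where "j \<in> I" "a \<in> S j" using cover a(1) by blast
  with i directed obtain k where k: "k \<in> I" "S i \<subseteq> S k" "a \<in> S k" by blast
  with i have "sat_in A (S k) (v(x := a)) f" using sat_in_mono by blast
  with k show ?case by auto
qed (use assms(1) in auto)

section \<open>Rings covered by directed homomorphic images\<close>

lemma directed_cover_common_member:
  assumes cover: "\<And>x. x \<in> A \<Longrightarrow> \<exists>i\<in>I. x \<in> S i"
    and directed: "\<And>i j. i \<in> I \<Longrightarrow> j \<in> I \<Longrightarrow> \<exists>k\<in>I. S i \<union> S j \<subseteq> S k"
    and "x \<in> A" "y \<in> A" "z \<in> A"
  shows "\<exists>m\<in>I. x \<in> S m \<and> y \<in> S m \<and> z \<in> S m"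
proof -
  obtain i j l where ijl: "i \<in> I" "j \<in> I" "l \<in> I" "x \<in> S i" "y \<in> S j" "z \<in> S l"
    using cover assms(3-5) by meson
  moreover obtain k where "k \<in> I" "S i \<union> S j \<subseteq> S k" using directed ijl(1,2) by blast
  moreover obtain m where "m \<in> I" "S k \<union> S l \<subseteq> S m" using directed \<open>k \<in> I\<close> ijl(3) by blast
  ultimately show ?thesis by blast
qed

lemma cring_by_directed_hom_images:
  assumes "cring P" and "i0 \<in> I"
    and hom: "\<And>i. i \<in> I \<Longrightarrow> \<phi> i \<in> ring_hom P T"
    and zero: "\<And>i. i \<in> I \<Longrightarrow> \<phi> i \<zero>\<^bsub>P\<^esub> = \<zero>\<^bsub>T\<^esub>"
    and cover: "\<And>x. x \<in> carrier T \<Longrightarrow> \<exists>i\<in>I. x \<in> \<phi> i ` carrier P"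
    and directed: "\<And>i j. i \<in> I \<Longrightarrow> j \<in> I \<Longrightarrow>
      \<exists>k\<in>I. \<phi> i ` carrier P \<union> \<phi> j ` carrier P \<subseteq> \<phi> k ` carrier P"
  shows "cring T"
proof -
  interpret P: cring P by fact
  note hom_eqs = ring_hom_mult[OF hom, symmetric] ring_hom_add[OF hom, symmetric]
    ring_hom_closed[OF hom]
  have closed: "\<zero>\<^bsub>T\<^esub> \<in> carrier T" "\<one>\<^bsub>T\<^esub> \<in> carrier T"
    using ring_hom_closed[OF hom[OF assms(2)], of "\<zero>\<^bsub>P\<^esub>"] zero[OF assms(2)]
      ring_hom_closed[OF hom[OF assms(2)], of "\<one>\<^bsub>P\<^esub>"] ring_hom_one[OF hom[OF assms(2)]]
    by auto
  have axioms: "x \<oplus>\<^bsub>T\<^esub> y \<in> carrier T \<and> x \<otimes>\<^bsub>T\<^esub> y \<in> carrier T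
      \<and> x \<oplus>\<^bsub>T\<^esub> y \<oplus>\<^bsub>T\<^esub> z = x \<oplus>\<^bsub>T\<^esub> (y \<oplus>\<^bsub>T\<^esub> z) \<and> x \<oplus>\<^bsub>T\<^esub> y = y \<oplus>\<^bsub>T\<^esub> x
      \<and> x \<otimes>\<^bsub>T\<^esub> y \<otimes>\<^bsub>T\<^esub> z = x \<otimes>\<^bsub>T\<^esub> (y \<otimes>\<^bsub>T\<^esub> z) \<and> x \<otimes>\<^bsub>T\<^esub> y = y \<otimes>\<^bsub>T\<^esub> x
      \<and> \<zero>\<^bsub>T\<^esub> \<oplus>\<^bsub>T\<^esub> x = x \<and> \<one>\<^bsub>T\<^esub> \<otimes>\<^bsub>T\<^esub> x = x
      \<and> (x \<oplus>\<^bsub>T\<^esub> y) \<otimes>\<^bsub>T\<^esub> z = x \<otimes>\<^bsub>T\<^esub> z \<oplus>\<^bsub>T\<^esub> y \<otimes>\<^bsub>T\<^esub> z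
      \<and> (\<exists>x'\<in>carrier T. x' \<oplus>\<^bsub>T\<^esub> x = \<zero>\<^bsub>T\<^esub>)"
    if xyz: "x \<in> carrier T" "y \<in> carrier T" "z \<in> carrier T" for x y z
  proof -
    obtain i a b c where abc: "i \<in> I" "a \<in> carrier P" "b \<in> carrier P"
      "c \<in> carrier P" "x = \<phi> i a" "y = \<phi> i b" "z = \<phi> i c"
      using directed_cover_common_member[OF cover directed xyz] by blast
    then have zero_one: "\<zero>\<^bsub>T\<^esub> = \<phi> i \<zero>\<^bsub>P\<^esub>" "\<one>\<^bsub>T\<^esub> = \<phi> i \<one>\<^bsub>P\<^esub>"
      using zero ring_hom_one[OF hom] by auto
    have "\<phi> i (\<ominus>\<^bsub>P\<^esub> a) \<in> carrier T" "\<phi> i (\<ominus>\<^bsub>P\<^esub> a) \<oplus>\<^bsub>T\<^esub> x = \<zero>\<^bsub>T\<^esub>"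
      using abc by (simp_all add: hom_eqs zero_one P.l_neg)
    moreover have "x \<oplus>\<^bsub>T\<^esub> y \<oplus>\<^bsub>T\<^esub> z = x \<oplus>\<^bsub>T\<^esub> (y \<oplus>\<^bsub>T\<^esub> z)"
      "x \<otimes>\<^bsub>T\<^esub> y \<otimes>\<^bsub>T\<^esub> z = x \<otimes>\<^bsub>T\<^esub> (y \<otimes>\<^bsub>T\<^esub> z)"
      "(x \<oplus>\<^bsub>T\<^esub> y) \<otimes>\<^bsub>T\<^esub> z = x \<otimes>\<^bsub>T\<^esub> z \<oplus>\<^bsub>T\<^esub> y \<otimes>\<^bsub>T\<^esub> z"
      using abc by (simp_all add: hom_eqs P.a_assoc P.m_assoc P.l_distr)
    moreover have "x \<oplus>\<^bsub>T\<^esub> y = y \<oplus>\<^bsub>T\<^esub> x" "x \<otimes>\<^bsub>T\<^esub> y = y \<otimes>\<^bsub>T\<^esub> x"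
      using abc by (simp_all add: hom_eqs P.a_comm P.m_comm)
    moreover have "x \<oplus>\<^bsub>T\<^esub> y \<in> carrier T" "x \<otimes>\<^bsub>T\<^esub> y \<in> carrier T"
      "\<zero>\<^bsub>T\<^esub> \<oplus>\<^bsub>T\<^esub> x = x" "\<one>\<^bsub>T\<^esub> \<otimes>\<^bsub>T\<^esub> x = x"
      using abc by (simp_all add: hom_eqs zero_one)
    ultimately show ?thesis by blast
  qed
  show ?thesis
    by (intro cringI abelian_groupI comm_monoidI closed) (use axioms in blast)+
qed

section \<open>Polynomials over \<open>F_p\<close>\<close>

abbreviation "Fp p \<equiv> residue_ring (int p)"

lemma Fp_simps:
  "carrier (Fp p) = {0..int p - 1}" "x \<otimes>\<^bsub>Fp p\<^esub> y = (x * y) mod int p"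
  "x \<oplus>\<^bsub>Fp p\<^esub> y = (x + y) mod int p" "\<zero>\<^bsub>Fp p\<^esub> = 0" "\<one>\<^bsub>Fp p\<^esub> = 1"
  by (simp_all add: residue_ring_def)

lemma carrier_UP: "carrier (UP R) = up R"
  by (simp add: UP_def)

lemma ex_bound_iff_finite:
  "(\<exists>n. bound z n f) \<longleftrightarrow> finite {i. f i \<noteq> z}"
proof
  assume "\<exists>n. bound z n f"
  then obtain n where "bound z n f" ..
  then have "{i. f i \<noteq> z} \<subseteq> {..n}" by (auto simp: bound_def not_le[symmetric])
  then show "finite {i. f i \<noteq> z}" by (rule finite_subset) simp
next
  assume "finite {i. f i \<noteq> z}"
  then obtain n where "\<forall>i\<in>{i. f i \<noteq> z}. i \<le> n"
    using finite_nat_set_iff_bounded_le by blast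
  then have "bound z n f" by (auto simp: bound_def not_le[symmetric])
  then show "\<exists>n. bound z n f" ..
qed

lemma UP_Fp_cring: "1 < p \<Longrightarrow> UP_cring (Fp p)"
proof -
  assume "1 < p"
  then interpret residues "int p" "Fp p" by unfold_locales auto
  show ?thesis by unfold_locales
qed

lemma UP_Fp_coeffs:
  assumes "f \<in> up (Fp p)" "g \<in> up (Fp p)" "1 < p"
  shows "(f \<otimes>\<^bsub>UP (Fp p)\<^esub> g) n = (\<Sum>i\<le>n. f i * g (n-i)) mod int p"
    "(f \<oplus>\<^bsub>UP (Fp p)\<^esub> g) n = (f n + g n) mod int p"
proof -
  interpret residues "int p" "Fp p" using assms(3) by unfold_locales auto
  have "(f \<otimes>\<^bsub>UP (Fp p)\<^esub> g) n = (\<Oplus>\<^bsub>Fp p\<^esub>i\<in>{..n}. f i \<otimes>\<^bsub>Fp p\<^esub> g (n-i))"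
    using assms by (simp add: UP_def)
  also have "\<dots> = (\<Oplus>\<^bsub>Fp p\<^esub>i\<in>{..n}. (f i * g (n-i)) mod int p)"
    by (simp add: Fp_simps)
  also have "\<dots> = (\<Sum>i\<le>n. f i * g (n-i)) mod int p"
    by (simp add: sum_cong)
  finally show "(f \<otimes>\<^bsub>UP (Fp p)\<^esub> g) n = (\<Sum>i\<le>n. f i * g (n-i)) mod int p" .
  show "(f \<oplus>\<^bsub>UP (Fp p)\<^esub> g) n = (f n + g n) mod int p"
    using assms by (simp add: UP_def Fp_simps)
qed

lemma UP_Fp_one_zero: "\<one>\<^bsub>UP (Fp p)\<^esub> = (\<lambda>i. if i = 0 then 1 else 0)" "\<zero>\<^bsub>UP (Fp p)\<^esub> = (\<lambda>i. 0)"
  by (simp_all add: UP_def residue_ring_def fun_eq_iff)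

lemma up_Fp_coeff_range: "f \<in> up (Fp p) \<Longrightarrow> f i \<in> {0..<int p}"
  unfolding up_def by (auto simp: Fp_simps)

lemma up_Fp_finite_support: "f \<in> up (Fp p) \<Longrightarrow> finite {i. f i \<noteq> 0}"
  unfolding up_def by (simp add: Fp_simps ex_bound_iff_finite)

lemma up_FpI:
  assumes "1 < p" "\<And>i. f i \<in> {0..<int p}" "finite {i. f i \<noteq> 0}"
  shows "f \<in> up (Fp p)"
  using assms unfolding up_def by (auto simp: Fp_simps ex_bound_iff_finite)

section \<open>The ring \<open>F_p[t^(1/\<infinity>)]\<close>\<close>

text \<open>The element \<open>f(t^a)\<close> of \<open>F_p[t^(1/\<infinity>)]\<close>, for the polynomial with coefficients \<open>f\<close>.\<close>

definition eval_tpow :: "rat \<Rightarrow> (nat \<Rightarrow> int) \<Rightarrow> rat \<Rightarrow> int" where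
  "eval_tpow a f = (\<lambda>q. if (\<exists>j::nat. q = of_nat j * a) then f (THE j::nat. q = of_nat j * a) else 0)"

lemma eval_tpow_on_grid: "0 < a \<Longrightarrow> eval_tpow a f (of_nat j * a) = f j"
  unfolding eval_tpow_def by (auto intro!: arg_cong[where f=f] the_equality)

lemma eval_tpow_off_grid: "\<not>(\<exists>j::nat. q = of_nat j * a) \<Longrightarrow> eval_tpow a f q = 0"
  unfolding eval_tpow_def by auto

lemma eval_tpow_support:
  assumes "0 < a" shows "{q. eval_tpow a f q \<noteq> 0} = (\<lambda>j. of_nat j * a) ` {j. f j \<noteq> 0}"
proof
  show "{q. eval_tpow a f q \<noteq> 0} \<subseteq> (\<lambda>j. of_nat j * a) ` {j. f j \<noteq> 0}"
  proof
    fix q assume "q \<in> {q. eval_tpow a f q \<noteq> 0}"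
    then have ne: "eval_tpow a f q \<noteq> 0" by simp
    then obtain j::nat where "q = of_nat j * a" using eval_tpow_off_grid by blast
    then show "q \<in> (\<lambda>j. of_nat j * a) ` {j. f j \<noteq> 0}" using ne eval_tpow_on_grid[OF assms] by auto
  qed
qed (use eval_tpow_on_grid[OF assms] in auto)

lemma eval_tpow_in_tinf_carrier:
  assumes "0 < a" "1 < p" "f \<in> up (Fp p)"
  shows "eval_tpow a f \<in> tinf_carrier p"
proof -
  have "finite {q. eval_tpow a f q \<noteq> 0}"
    using up_Fp_finite_support[OF assms(3)] eval_tpow_support[OF assms(1)] by simp
  moreover have "eval_tpow a f q \<noteq> 0 \<Longrightarrow> q \<ge> 0" for q
    using eval_tpow_off_grid[of q a f] assms(1)
    by (metis of_nat_0_le_iff zero_le_mult_iff less_imp_le)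
  moreover have "eval_tpow a f q \<in> {0..<int p}" for q
    using up_Fp_coeff_range[OF assms(3)] assms(2) by (simp add: eval_tpow_def)
  ultimately show ?thesis unfolding tinf_carrier_def by auto
qed

lemma tinf_mult_eval_tpow:
  assumes "0 < a"
  shows "tinf_mult p (eval_tpow a f) g q
    = (\<Sum>j | f j \<noteq> 0. f j * g (q - of_nat j * a)) mod int p"
proof -
  have "inj_on (\<lambda>j::nat. of_nat j * a) {j. f j \<noteq> 0}" using assms(1) by (auto simp: inj_on_def)
  then show ?thesis
    unfolding tinf_mult_def eval_tpow_support[OF assms(1)]
    by (simp add: sum.reindex eval_tpow_on_grid[OF assms(1)])
qed

lemma eval_tpow_mult:
  assumes a: "0 < a" and p: "1 < p" and f: "f \<in> up (Fp p)" and g: "g \<in> up (Fp p)"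
  shows "eval_tpow a (f \<otimes>\<^bsub>UP (Fp p)\<^esub> g) = tinf_mult p (eval_tpow a f) (eval_tpow a g)"
proof
  fix q
  define D where "D = {j. f j \<noteq> 0}"
  have "finite D" using up_Fp_finite_support[OF f] by (simp add: D_def)
  show "eval_tpow a (f \<otimes>\<^bsub>UP (Fp p)\<^esub> g) q = tinf_mult p (eval_tpow a f) (eval_tpow a g) q"
  proof (cases "\<exists>n::nat. q = of_nat n * a")
    case True
    then obtain n :: nat where q: "q = of_nat n * a" by blast
    define h where "h j = (if j \<le> n then f j * g (n - j) else 0)" for j
    have h: "f j * eval_tpow a g (q - of_nat j * a) = h j" for j
    proof (cases "j \<le> n")
      case True
      then have "q - of_nat j * a = of_nat (n - j) * a" using q by (simp add: of_nat_diff algebra_simps)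
      then show ?thesis using True eval_tpow_on_grid[OF a] h_def by (simp del: of_nat_diff)
    next
      case False
      then have "q - of_nat j * a < 0" using q a by (simp add: algebra_simps)
      then have "\<not> (\<exists>i::nat. q - of_nat j * a = of_nat i * a)" using a
        by (metis not_less of_nat_0_le_iff zero_le_mult_iff less_imp_le)
      then show ?thesis using eval_tpow_off_grid False h_def by simp
    qed
    have "(\<Sum>j\<in>D. h j) = (\<Sum>j\<in>D \<union> {..n}. h j)"
      using \<open>finite D\<close> by (intro sum.mono_neutral_left) (auto simp: D_def h_def)
    also have "\<dots> = (\<Sum>j\<le>n. h j)"
      using \<open>finite D\<close> by (intro sum.mono_neutral_right) (auto simp: D_def h_def)
    also have "\<dots> = (\<Sum>j\<le>n. f j * g (n - j))" by (simp add: h_def)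
    finally show ?thesis
      using q h eval_tpow_on_grid[OF a] UP_Fp_coeffs(1)[OF f g p] tinf_mult_eval_tpow[OF a]
      by (simp add: D_def)
  next
    case False
    have "\<not> (\<exists>i::nat. q - of_nat j * a = of_nat i * a)" for j
    proof
      assume "\<exists>i::nat. q - of_nat j * a = of_nat i * a"
      then obtain i :: nat where "q = of_nat (i + j) * a" by (auto simp: algebra_simps)
      with False show False by blast
    qed
    then show ?thesis using False eval_tpow_off_grid tinf_mult_eval_tpow[OF a] by simp
  qed
qed
lemma eval_tpow_add:
  assumes a: "0 < a" and p: "1 < p" and f: "f \<in> up (Fp p)" and g: "g \<in> up (Fp p)"
  shows "eval_tpow a (f \<oplus>\<^bsub>UP (Fp p)\<^esub> g) = tinf_add p (eval_tpow a f) (eval_tpow a g)"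
proof
  fix q show "eval_tpow a (f \<oplus>\<^bsub>UP (Fp p)\<^esub> g) q = tinf_add p (eval_tpow a f) (eval_tpow a g) q"
  proof (cases "\<exists>n::nat. q = of_nat n * a")
    case True
    then obtain n::nat where q: "q = of_nat n * a" by blast
    then show ?thesis using eval_tpow_on_grid[OF a] UP_Fp_coeffs(2)[OF f g p] by (simp add: tinf_add_def)
  qed (simp add: eval_tpow_off_grid tinf_add_def)
qed

lemma eval_tpow_one:
  assumes a: "0 < a" shows "eval_tpow a \<one>\<^bsub>UP (Fp p)\<^esub> = tinf_one"
proof
  fix q show "eval_tpow a \<one>\<^bsub>UP (Fp p)\<^esub> q = tinf_one q"
  proof (cases "\<exists>n::nat. q = of_nat n * a")
    case True
    then obtain n::nat where q: "q = of_nat n * a" by blast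
    then show ?thesis using eval_tpow_on_grid[OF a] a by (simp add: tinf_one_def UP_Fp_one_zero)
  next
    case False
    then have "q \<noteq> 0" by (metis mult_zero_left of_nat_0)
    then show ?thesis using False by (simp add: eval_tpow_off_grid tinf_one_def)
  qed
qed

lemma eval_tpow_zero: "eval_tpow a \<zero>\<^bsub>UP (Fp p)\<^esub> = (\<lambda>q. 0)"
  by (simp add: eval_tpow_def UP_Fp_one_zero)

lemma eval_tpow_ring_hom:
  assumes a: "0 < a" and p: "1 < p"
  shows "eval_tpow a \<in> ring_hom (UP (Fp p)) (Fp_tinf p)"
proof -
  show ?thesis
    by (rule ring_hom_memI)
      (auto simp: carrier_UP Fp_tinf_def eval_tpow_in_tinf_carrier[OF a p] eval_tpow_mult[OF a p] eval_tpow_add[OF a p] eval_tpow_one[OF a])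
qed

definition pcompose_pow :: "nat \<Rightarrow> (nat \<Rightarrow> int) \<Rightarrow> nat \<Rightarrow> int" where
  "pcompose_pow N c = (\<lambda>i. if N dvd i then c (i div N) else 0)"

lemma eval_tpow_pcompose_pow:
  assumes a: "0 < a" and N: "0 < N"
  shows "eval_tpow (of_nat N * a) c = eval_tpow a (pcompose_pow N c)"
proof
  fix q
  have Na: "0 < of_nat N * a" using a N by simp
  show "eval_tpow (of_nat N * a) c q = eval_tpow a (pcompose_pow N c) q"
  proof (cases "\<exists>j::nat. q = of_nat j * (of_nat N * a)")
    case True
    then obtain j::nat where q: "q = of_nat j * (of_nat N * a)" by blast
    then have q2: "q = of_nat (j * N) * a" by (simp add: algebra_simps)
    have l: "eval_tpow (of_nat N * a) c q = c j" using q eval_tpow_on_grid[OF Na] by simp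
    have "eval_tpow a (pcompose_pow N c) q = pcompose_pow N c (j * N)" by (simp only: q2 eval_tpow_on_grid[OF a])
    also have "\<dots> = c j" using N by (simp add: pcompose_pow_def)
    finally show ?thesis using l by simp
  next
    case False
    have "eval_tpow a (pcompose_pow N c) q = 0"
    proof (cases "\<exists>i::nat. q = of_nat i * a")
      case True
      then obtain i::nat where q: "q = of_nat i * a" by blast
      have "\<not> N dvd i"
      proof
        assume "N dvd i" then obtain j where "i = N * j" by auto
        then have "q = of_nat j * (of_nat N * a)" using q by (simp add: algebra_simps)
        then show False using False by blast
      qed
      then show ?thesis using q eval_tpow_on_grid[OF a] by (simp add: pcompose_pow_def)
    qed (simp add: eval_tpow_off_grid)
    then show ?thesis using False eval_tpow_off_grid by simp
  qed
qed

lemma pcompose_pow_in_up: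
  assumes "c \<in> up (Fp p)" "0 < N" "1 < p"
  shows "pcompose_pow N c \<in> up (Fp p)"
proof -
  have "{i. pcompose_pow N c i \<noteq> 0} = (\<lambda>j. N * j) ` {j. c j \<noteq> 0}"
    using assms(2) by (auto simp: pcompose_pow_def)
  then show ?thesis
    using up_Fp_finite_support[OF assms(1)] up_Fp_coeff_range[OF assms(1)] assms(2,3)
    by (intro up_FpI) (auto simp: pcompose_pow_def)
qed

definition grid_image :: "nat \<Rightarrow> nat \<Rightarrow> (rat \<Rightarrow> int) set" where
  "grid_image p M = eval_tpow (1 / of_nat M) ` up (Fp p)"

lemma eval_tpow_frac_in_grid_image:
  assumes "c \<in> up (Fp p)" "0 < k" "0 < n" "1 < p"
  shows "eval_tpow (of_nat k / of_nat n) c \<in> grid_image p n"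
proof -
  have "eval_tpow (of_nat k / of_nat n) c = eval_tpow (1 / of_nat n) (pcompose_pow k c)"
    using eval_tpow_pcompose_pow[of "1 / of_nat n" k c] assms(2,3) by simp
  then show ?thesis using pcompose_pow_in_up[OF assms(1,2,4)] unfolding grid_image_def by blast
qed

lemma grid_image_mono:
  assumes "0 < M" "0 < N" "1 < p"
  shows "grid_image p M \<subseteq> grid_image p (M * N)"
proof
  fix x assume "x \<in> grid_image p M"
  then obtain c where c: "c \<in> up (Fp p)" "x = eval_tpow (1 / of_nat M) c"
    unfolding grid_image_def by blast
  have "(1 / of_nat M :: rat) = of_nat N / of_nat (M * N)" using assms by simp
  moreover have "0 < M * N" using assms by simp
  ultimately show "x \<in> grid_image p (M * N)"
    unfolding c(2) using eval_tpow_frac_in_grid_image[OF c(1) assms(2) _ assms(3)] by metis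
qed

lemma nonneg_rats_common_denominator:
  fixes S :: "rat set"
  assumes "finite S" "\<forall>q\<in>S. 0 \<le> q"
  shows "\<exists>M>0. \<forall>q\<in>S. \<exists>k::nat. q = of_nat k * (1 / of_nat M)"
proof -
  define M where "M = (\<Prod>r\<in>S. nat (snd (quotient_of r)))"
  have "M > 0" unfolding M_def using assms(1) by (auto intro!: prod_pos simp: quotient_of_denom_pos')
  moreover have "\<exists>k::nat. q = of_nat k * (1 / of_nat M)" if "q \<in> S" for q
  proof -
    obtain n d where nd: "quotient_of q = (n, d)" by (cases "quotient_of q")
    have "nat d dvd M" unfolding M_def using that assms(1) nd by (metis dvd_prodI snd_conv)
    then obtain e where "M = nat d * e" by (auto elim: dvdE)
    then have qM: "q * of_nat M = of_int (n * int e)"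
      using quotient_of_div[OF nd] quotient_of_denom_pos[OF nd] by (simp add: field_simps)
    moreover have "q * of_nat M \<ge> 0" using assms(2) that by simp
    ultimately have "n * int e \<ge> 0" by (metis of_int_0_le_iff)
    with qM \<open>M > 0\<close> have "q = of_nat (nat (n * int e)) * (1 / of_nat M)"
      by (simp add: field_simps)
    then show ?thesis by blast
  qed
  ultimately show ?thesis by blast
qed

lemma tinf_carrier_in_grid_image:
  assumes x: "x \<in> tinf_carrier p" and p: "1 < p"
  shows "\<exists>M>0. x \<in> grid_image p M"
proof -
  have fin: "finite {q. x q \<noteq> 0}" and vals: "\<And>q. x q \<in> {0..<int p}"
    and nonneg: "\<forall>q\<in>{q. x q \<noteq> 0}. 0 \<le> q"
    using x unfolding tinf_carrier_def by auto
  obtain M :: nat where M: "M > 0"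
    and grid: "\<forall>q\<in>{q. x q \<noteq> 0}. \<exists>k::nat. q = of_nat k * (1 / of_nat M)"
    using nonneg_rats_common_denominator[OF fin nonneg] by blast
  define f where "f i = x (of_nat i * (1 / of_nat M))" for i
  have "inj (\<lambda>i::nat. of_nat i * (1 / (of_nat M :: rat)))" using M by (auto simp: inj_def)
  moreover have "{i. f i \<noteq> 0} = (\<lambda>i. of_nat i * (1 / of_nat M)) -` {q. x q \<noteq> 0}"
    by (auto simp: f_def)
  ultimately have "finite {i. f i \<noteq> 0}" using finite_vimageI[OF fin] by simp
  then have f: "f \<in> up (Fp p)" using p vals by (intro up_FpI) (simp_all add: f_def)
  have "x q = eval_tpow (1 / of_nat M) f q" for q
  proof (cases "\<exists>j::nat. q = of_nat j * (1 / of_nat M)")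
    case True
    then obtain j :: nat where "q = of_nat j * (1 / of_nat M)" by blast
    with M show ?thesis using eval_tpow_on_grid[of "1 / of_nat M" f j] f_def by simp
  next
    case False
    with grid have "x q = 0" by blast
    with False show ?thesis using eval_tpow_off_grid by simp
  qed
  with M f show ?thesis unfolding grid_image_def by blast
qed

lemma Fp_tinf_cring:
  assumes p: "1 < p"
  shows "cring (Fp_tinf p)"
proof (rule cring_by_directed_hom_images)
  show "cring (UP (Fp p))" using UP_cring.UP_cring[OF UP_Fp_cring[OF p]] .
next
  show "1 \<in> {M :: nat. 0 < M}" by simp
next
  fix M :: nat assume "M \<in> {M. 0 < M}"
  then show "eval_tpow (1 / of_nat M) \<in> ring_hom (UP (Fp p)) (Fp_tinf p)"
    using p by (intro eval_tpow_ring_hom) auto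
next
  fix M :: nat
  show "eval_tpow (1 / of_nat M) \<zero>\<^bsub>UP (Fp p)\<^esub> = \<zero>\<^bsub>Fp_tinf p\<^esub>"
    by (simp add: eval_tpow_zero Fp_tinf_def)
next
  fix x assume "x \<in> carrier (Fp_tinf p)"
  then show "\<exists>M\<in>{M. 0 < M}. x \<in> eval_tpow (1 / of_nat M) ` carrier (UP (Fp p))"
    using tinf_carrier_in_grid_image[OF _ p] by (auto simp: Fp_tinf_def grid_image_def carrier_UP)
next
  fix M N :: nat assume M: "M \<in> {M. 0 < M}" and N: "N \<in> {M. 0 < M}"
  then have "grid_image p M \<union> grid_image p N \<subseteq> grid_image p (M * N)"
    using grid_image_mono[of M N p] grid_image_mono[of N M p] p by (auto simp: mult.commute)
  then show "\<exists>K\<in>{M. 0 < M}. eval_tpow (1 / of_nat M) ` carrier (UP (Fp p))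
      \<union> eval_tpow (1 / of_nat N) ` carrier (UP (Fp p)) \<subseteq> eval_tpow (1 / of_nat K) ` carrier (UP (Fp p))"
    using M N by (intro bexI[of _ "M * N"]) (auto simp: grid_image_def carrier_UP)
qed

section \<open>The quotients by \<open>(t)\<close> and \<open>(t^n)\<close>\<close>

lemma quot_carrier: "carrier (R Quot I) = (\<lambda>a. I +>\<^bsub>R\<^esub> a) ` carrier R"
  by (auto simp: FactRing_def A_RCOSETS_def')

lemma quot_zero: "\<zero>\<^bsub>R Quot I\<^esub> = I"
  by (simp add: FactRing_def)

lemma (in ideal) rcos_eq_self_iff: "x \<in> carrier R \<Longrightarrow> I +> x = I \<longleftrightarrow> x \<in> I"
  using a_rcos_self a_rcos_const by auto

lemma tvar_inf_in_tinf_carrier: "1 < p \<Longrightarrow> tvar_inf \<in> tinf_carrier p"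
proof -
  have "{q. tvar_inf q \<noteq> 0} = {1}" by (auto simp: tvar_inf_def)
  then show "1 < p \<Longrightarrow> ?thesis" by (auto simp: tinf_carrier_def tvar_inf_def)
qed

lemma tinf_mult_tvar_inf:
  assumes x: "x \<in> tinf_carrier p"
  shows "tinf_mult p x tvar_inf = (\<lambda>q. x (q - 1))"
proof
  fix q
  have fin: "finite {r. x r \<noteq> 0}" and vals: "\<And>q. x q \<in> {0..<int p}"
    using x by (auto simp: tinf_carrier_def)
  have "(\<Sum>r | x r \<noteq> 0. x r * tvar_inf (q - r)) = (\<Sum>r | x r \<noteq> 0. if r = q - 1 then x r else 0)"
    by (rule sum.cong) (auto simp: tvar_inf_def)
  also have "\<dots> = x (q - 1)" using fin by (simp add: sum.delta')
  finally show "tinf_mult p x tvar_inf q = x (q - 1)"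
    using vals[of "q - 1"] by (simp add: tinf_mult_def)
qed

definition t_ideal :: "nat \<Rightarrow> (rat \<Rightarrow> int) set" where
  "t_ideal p = PIdl\<^bsub>Fp_tinf p\<^esub> tvar_inf"

lemma t_ideal_ideal: "1 < p \<Longrightarrow> ideal (t_ideal p) (Fp_tinf p)"
  unfolding t_ideal_def
  by (rule cring.cgenideal_ideal[OF Fp_tinf_cring]) (auto simp: tvar_inf_in_tinf_carrier Fp_tinf_def)

lemma Fp_tinf_mod_t_eq: "Fp_tinf_mod_t p = Fp_tinf p Quot t_ideal p"
  by (simp add: Fp_tinf_mod_t_def t_ideal_def)

lemma t_ideal_eq:
  assumes p: "1 < p"
  shows "t_ideal p = {y \<in> tinf_carrier p. \<forall>q<1. y q = 0}"
proof
  show "t_ideal p \<subseteq> {y \<in> tinf_carrier p. \<forall>q<1. y q = 0}"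
  proof
    fix y assume y: "y \<in> t_ideal p"
    then obtain x where x: "x \<in> tinf_carrier p" "y = tinf_mult p x tvar_inf"
      by (auto simp: t_ideal_def cgenideal_def Fp_tinf_def)
    have "y \<in> tinf_carrier p"
      using ideal.Icarr[OF t_ideal_ideal[OF p] y] by (simp add: Fp_tinf_def)
    moreover have "x (q - 1) = 0" if "q < 1" for q
    proof -
      from that have "\<not> q - 1 \<ge> 0" by simp
      with x(1) show ?thesis unfolding tinf_carrier_def by blast
    qed
    ultimately show "y \<in> {y \<in> tinf_carrier p. \<forall>q<1. y q = 0}"
      using x tinf_mult_tvar_inf by simp
  qed
next
  show "{y \<in> tinf_carrier p. \<forall>q<1. y q = 0} \<subseteq> t_ideal p"
  proof
    fix y assume y: "y \<in> {y \<in> tinf_carrier p. \<forall>q<1. y q = 0}"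
    define x where "x q = y (q + 1)" for q
    have "{q. x q \<noteq> 0} = (\<lambda>q. q - 1) ` {q. y q \<noteq> 0}"
      unfolding x_def by (auto simp: image_iff) (metis add_diff_cancel_right')
    moreover have "q \<ge> 0" if "x q \<noteq> 0" for q
    proof -
      from that y have "\<not> q + 1 < 1" unfolding x_def by auto
      then show ?thesis by simp
    qed
    ultimately have x: "x \<in> tinf_carrier p"
      using y unfolding tinf_carrier_def x_def by auto
    have "tinf_mult p x tvar_inf = y" using tinf_mult_tvar_inf[OF x] unfolding x_def by simp
    with x show "y \<in> t_ideal p" by (auto simp: t_ideal_def cgenideal_def Fp_tinf_def)
  qed
qed

definition eval_frac_mod_t :: "nat \<Rightarrow> nat \<Rightarrow> nat \<Rightarrow> (nat \<Rightarrow> int) \<Rightarrow> (rat \<Rightarrow> int) set" where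
  "eval_frac_mod_t p k n f = t_ideal p +>\<^bsub>Fp_tinf p\<^esub> eval_tpow (of_nat k / of_nat n) f"

lemma eval_frac_mod_t_ring_hom:
  assumes "0 < k" "0 < n" "1 < p"
  shows "ring_hom_ring (UP (Fp p)) (Fp_tinf_mod_t p) (eval_frac_mod_t p k n)"
proof -
  interpret I: ideal "t_ideal p" "Fp_tinf p" using t_ideal_ideal[OF assms(3)] .
  have "eval_frac_mod_t p k n = (+>\<^bsub>Fp_tinf p\<^esub>) (t_ideal p) \<circ> eval_tpow (of_nat k / of_nat n)"
    by (simp add: eval_frac_mod_t_def fun_eq_iff)
  then have "eval_frac_mod_t p k n \<in> ring_hom (UP (Fp p)) (Fp_tinf_mod_t p)"
    using ring_hom_trans[OF eval_tpow_ring_hom I.rcos_ring_hom] assms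
    by (simp add: Fp_tinf_mod_t_eq)
  then show ?thesis
    using I.quotient_is_ring cring.axioms(1)[OF UP_cring.UP_cring[OF UP_Fp_cring[OF assms(3)]]]
    by (intro ring_hom_ringI2) (auto simp: Fp_tinf_mod_t_eq)
qed

lemma frac_grid_lt_one_iff: "0 < n \<Longrightarrow> of_nat j * (of_nat k / of_nat n) < (1::rat) \<longleftrightarrow> j * k < n"
proof -
  assume "0 < n"
  then have "of_nat j * (of_nat k / of_nat n) < (1::rat) \<longleftrightarrow> of_nat (j * k) < (of_nat n :: rat)"
    by (simp add: field_simps)
  then show ?thesis by (simp only: of_nat_less_iff)
qed

lemma eval_frac_mod_t_eq_zero_iff:
  assumes k: "0 < k" and n: "0 < n" and p: "1 < p" and f: "f \<in> carrier (UP (Fp p))"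
  shows "eval_frac_mod_t p k n f = \<zero>\<^bsub>Fp_tinf_mod_t p\<^esub> \<longleftrightarrow> (\<forall>j. j * k < n \<longrightarrow> f j = 0)"
proof -
  define a :: rat where "a = of_nat k / of_nat n"
  have a: "0 < a" using k n by (simp add: a_def)
  have e: "eval_tpow a f \<in> carrier (Fp_tinf p)"
    using eval_tpow_in_tinf_carrier[OF a p] f by (simp add: carrier_UP Fp_tinf_def)
  have "eval_frac_mod_t p k n f = \<zero>\<^bsub>Fp_tinf_mod_t p\<^esub> \<longleftrightarrow> eval_tpow a f \<in> t_ideal p"
    using ideal.rcos_eq_self_iff[OF t_ideal_ideal[OF p] e]
    by (simp add: eval_frac_mod_t_def a_def Fp_tinf_mod_t_eq quot_zero)
  also have "\<dots> \<longleftrightarrow> (\<forall>q<1. eval_tpow a f q = 0)"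
    using e t_ideal_eq[OF p] by (simp add: Fp_tinf_def)
  also have "\<dots> \<longleftrightarrow> (\<forall>j. of_nat j * a < 1 \<longrightarrow> f j = 0)"
  proof
    assume "\<forall>q<1. eval_tpow a f q = 0"
    then show "\<forall>j. of_nat j * a < 1 \<longrightarrow> f j = 0" using eval_tpow_on_grid[OF a] by metis
  next
    assume h: "\<forall>j. of_nat j * a < 1 \<longrightarrow> f j = 0"
    show "\<forall>q<1. eval_tpow a f q = 0"
    proof (intro allI impI)
      fix q :: rat assume "q < 1"
      show "eval_tpow a f q = 0"
      proof (cases "\<exists>j::nat. q = of_nat j * a")
        case True
        then obtain j :: nat where "q = of_nat j * a" by blast
        with h \<open>q < 1\<close> show ?thesis using eval_tpow_on_grid[OF a] by simp
      qed (simp add: eval_tpow_off_grid)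
    qed
  qed
  finally show ?thesis using frac_grid_lt_one_iff[OF n] by (simp add: a_def)
qed

lemma eval_frac_mod_t_image_subset:
  assumes "0 < k" "0 < n" "1 < p"
  shows "eval_frac_mod_t p k n ` carrier (UP (Fp p)) \<subseteq> eval_frac_mod_t p 1 n ` carrier (UP (Fp p))"
proof
  fix y assume "y \<in> eval_frac_mod_t p k n ` carrier (UP (Fp p))"
  then obtain c where c: "c \<in> up (Fp p)" "y = eval_frac_mod_t p k n c" by (auto simp: carrier_UP)
  then obtain c' where "c' \<in> up (Fp p)" "eval_tpow (of_nat k / of_nat n) c = eval_tpow (1 / of_nat n) c'"
    using eval_tpow_frac_in_grid_image[OF c(1) assms] unfolding grid_image_def by blast
  with c show "y \<in> eval_frac_mod_t p 1 n ` carrier (UP (Fp p))"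
    by (auto simp: eval_frac_mod_t_def carrier_UP)
qed

lemma eval_frac_mod_t_image_mono:
  assumes "0 < M" "0 < N" "1 < p"
  shows "eval_frac_mod_t p 1 M ` carrier (UP (Fp p)) \<subseteq> eval_frac_mod_t p 1 (M * N) ` carrier (UP (Fp p))"
proof -
  have "(of_nat 1 / of_nat M :: rat) = of_nat N / of_nat (M * N)" using assms by simp
  then have "eval_frac_mod_t p 1 M c = eval_frac_mod_t p N (M * N) c" for c
    unfolding eval_frac_mod_t_def by (simp only:)
  then have "eval_frac_mod_t p 1 M ` carrier (UP (Fp p)) = eval_frac_mod_t p N (M * N) ` carrier (UP (Fp p))"
    by auto
  with assms show ?thesis using eval_frac_mod_t_image_subset[of N "M * N" p] by simp
qed

lemma Fp_tinf_mod_t_carrier_covered: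
  assumes p: "1 < p" and y: "y \<in> carrier (Fp_tinf_mod_t p)"
  shows "\<exists>M>0. y \<in> eval_frac_mod_t p 1 M ` carrier (UP (Fp p))"
proof -
  obtain x where x: "x \<in> tinf_carrier p" "y = t_ideal p +>\<^bsub>Fp_tinf p\<^esub> x"
    using y by (auto simp: Fp_tinf_mod_t_eq quot_carrier Fp_tinf_def)
  then obtain M where "M > 0" "x \<in> grid_image p M"
    using tinf_carrier_in_grid_image[OF _ p] by blast
  with x show ?thesis by (auto simp: grid_image_def eval_frac_mod_t_def carrier_UP)
qed

lemma monom_one_UP_Fp: "1 < p \<Longrightarrow> monom (UP (Fp p)) 1 n = (\<lambda>i. if i = n then 1 else 0)"
  by (simp add: UP_def Fp_simps fun_eq_iff)

lemma UP_Fp_mult_monom_one: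
  assumes p: "1 < p" and g: "g \<in> up (Fp p)"
  shows "g \<otimes>\<^bsub>UP (Fp p)\<^esub> monom (UP (Fp p)) 1 n = (\<lambda>k. if n \<le> k then g (k - n) else 0)"
proof
  fix k
  interpret P: UP_cring "Fp p" "UP (Fp p)" by (rule UP_Fp_cring[OF p])
  have m: "monom (UP (Fp p)) 1 n \<in> up (Fp p)"
    using P.monom_closed[OF P.R.one_closed, of n] by (simp add: carrier_UP Fp_simps)
  have "(\<Sum>i\<le>k. g i * monom (UP (Fp p)) 1 n (k - i))
      = (\<Sum>i\<le>k. if i = k - n then (if n \<le> k then g i else 0) else 0)"
    by (rule sum.cong) (auto simp: monom_one_UP_Fp[OF p])
  also have "\<dots> = (if n \<le> k then g (k - n) else 0)" by (simp add: sum.delta')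
  moreover have "g (k - n) \<in> {0..<int p}" by (rule up_Fp_coeff_range[OF g])
  ultimately show "(g \<otimes>\<^bsub>UP (Fp p)\<^esub> monom (UP (Fp p)) 1 n) k = (if n \<le> k then g (k - n) else 0)"
    using UP_Fp_coeffs(1)[OF g m p] by simp
qed

definition tpow_ideal :: "nat \<Rightarrow> nat \<Rightarrow> (nat \<Rightarrow> int) set" where
  "tpow_ideal p n = PIdl\<^bsub>UP (Fp p)\<^esub> (monom (UP (Fp p)) 1 n)"

lemma tpow_ideal_ideal: "1 < p \<Longrightarrow> ideal (tpow_ideal p n) (UP (Fp p))"
proof -
  assume p: "1 < p"
  interpret P: UP_cring "Fp p" "UP (Fp p)" by (rule UP_Fp_cring[OF p])
  have "monom (UP (Fp p)) 1 n \<in> carrier (UP (Fp p))"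
    using P.monom_closed[OF P.R.one_closed, of n] by (simp add: Fp_simps)
  then show ?thesis unfolding tpow_ideal_def by (rule P.cgenideal_ideal)
qed

lemma tpow_ideal_eq:
  assumes p: "1 < p"
  shows "tpow_ideal p n = {f \<in> up (Fp p). \<forall>j<n. f j = 0}"
proof
  show "tpow_ideal p n \<subseteq> {f \<in> up (Fp p). \<forall>j<n. f j = 0}"
  proof
    fix f assume f: "f \<in> tpow_ideal p n"
    then obtain g where g: "g \<in> up (Fp p)" "f = g \<otimes>\<^bsub>UP (Fp p)\<^esub> monom (UP (Fp p)) 1 n"
      by (auto simp: tpow_ideal_def cgenideal_def carrier_UP)
    have "f \<in> up (Fp p)"
      using ideal.Icarr[OF tpow_ideal_ideal[OF p] f] by (simp add: carrier_UP)
    with g show "f \<in> {f \<in> up (Fp p). \<forall>j<n. f j = 0}" using UP_Fp_mult_monom_one[OF p] by simp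
  qed
next
  show "{f \<in> up (Fp p). \<forall>j<n. f j = 0} \<subseteq> tpow_ideal p n"
  proof
    fix f assume f: "f \<in> {f \<in> up (Fp p). \<forall>j<n. f j = 0}"
    define g where "g i = f (i + n)" for i
    have fu: "f \<in> up (Fp p)" using f by simp
    have "inj (\<lambda>i::nat. i + n)" by (simp add: inj_def)
    from finite_vimageI[OF up_Fp_finite_support[OF fu] this]
    have "finite {i. g i \<noteq> 0}" unfolding g_def vimage_def by simp
    then have g: "g \<in> up (Fp p)"
      using p up_Fp_coeff_range[OF fu] by (intro up_FpI) (simp_all add: g_def)
    have "g \<otimes>\<^bsub>UP (Fp p)\<^esub> monom (UP (Fp p)) 1 n = f"
      using UP_Fp_mult_monom_one[OF p g] f unfolding g_def by (auto simp: fun_eq_iff)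
    with g show "f \<in> tpow_ideal p n" unfolding tpow_ideal_def cgenideal_def carrier_UP by auto
  qed
qed

definition trunc_proj :: "nat \<Rightarrow> nat \<Rightarrow> (nat \<Rightarrow> int) \<Rightarrow> (nat \<Rightarrow> int) set" where
  "trunc_proj p n f = tpow_ideal p n +>\<^bsub>UP (Fp p)\<^esub> f"

lemma Fp_trunc_eq: "Fp_trunc p n = UP (Fp p) Quot tpow_ideal p n"
  by (simp add: Fp_trunc_def Fp_poly_def tpow_ideal_def)

lemma trunc_proj_ring_hom: "1 < p \<Longrightarrow> ring_hom_ring (UP (Fp p)) (Fp_trunc p n) (trunc_proj p n)"
  using ideal.rcos_ring_hom_ring[OF tpow_ideal_ideal]
  by (simp add: Fp_trunc_eq trunc_proj_def[abs_def])

lemma trunc_proj_eq_zero_iff: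
  assumes "1 < p" "f \<in> carrier (UP (Fp p))"
  shows "trunc_proj p n f = \<zero>\<^bsub>Fp_trunc p n\<^esub> \<longleftrightarrow> (\<forall>j<n. f j = 0)"
  using ideal.rcos_eq_self_iff[OF tpow_ideal_ideal[OF assms(1)] assms(2)] tpow_ideal_eq[OF assms(1)] assms(2)
  by (simp add: Fp_trunc_eq quot_zero trunc_proj_def carrier_UP)

lemma trunc_proj_surj: "trunc_proj p n ` carrier (UP (Fp p)) = carrier (Fp_trunc p n)"
  by (simp add: Fp_trunc_eq quot_carrier trunc_proj_def)

lemma Fp_trunc_ring: "1 < p \<Longrightarrow> ring (Fp_trunc p n)"
  using ring_hom_ring.axioms(2)[OF trunc_proj_ring_hom] .

lemma Fp_tinf_mod_t_ring: "1 < p \<Longrightarrow> ring (Fp_tinf_mod_t p)"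
  using ring_hom_ring.axioms(2)[OF eval_frac_mod_t_ring_hom[of 1 1]] by simp

lemma models_Fp_tinf_mod_t_if_models_Fp_trunc:
  assumes p: "1 < p" and n: "0 < n" and f: "sentence f" "existential f"
    and m: "models (Fp_trunc p n) f"
  shows "models (Fp_tinf_mod_t p) f"
proof -
  have g: "ring_hom_ring (UP (Fp p)) (Fp_tinf_mod_t p) (eval_frac_mod_t p 1 n)"
    using eval_frac_mod_t_ring_hom[OF _ n p] by simp
  have "sat_in (Fp_trunc p n) (carrier (Fp_trunc p n)) (\<lambda>_. \<zero>\<^bsub>Fp_trunc p n\<^esub>) f"
    using m models_iff_sat_in_carrier[OF f Fp_trunc_ring[OF p]] by simp
  then have "sat_in (Fp_tinf_mod_t p) (carrier (Fp_tinf_mod_t p)) (\<lambda>_. \<zero>\<^bsub>Fp_tinf_mod_t p\<^esub>) f"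
  proof (rule sat_in_transfer_zero[OF trunc_proj_ring_hom[OF p] g _ _ f(2), rotated 2])
    show "\<forall>x\<in>carrier (UP (Fp p)). (trunc_proj p n x = \<zero>\<^bsub>Fp_trunc p n\<^esub>)
        = (eval_frac_mod_t p 1 n x = \<zero>\<^bsub>Fp_tinf_mod_t p\<^esub>)"
      using trunc_proj_eq_zero_iff[OF p] eval_frac_mod_t_eq_zero_iff[OF _ n p] by simp
    show "\<forall>a\<in>carrier (Fp_trunc p n). \<exists>c\<in>carrier (UP (Fp p)).
        trunc_proj p n c = a \<and> eval_frac_mod_t p 1 n c \<in> carrier (Fp_tinf_mod_t p)"
      unfolding trunc_proj_surj[symmetric] using ring_hom_closed[OF ring_hom_ring.homh[OF g]] by blast
  qed
  then show ?thesis using models_iff_sat_in_carrier[OF f Fp_tinf_mod_t_ring[OF p]] by simp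
qed

lemma exists_scale_cutoff:
  fixes M n :: nat
  assumes M: "0 < M" and n: "M * M < n"
  shows "\<exists>k>0. \<forall>j. j * k < n \<longleftrightarrow> j < M"
proof -
  define k where "k = (n + M - 1) div M"
  have "k * M + (n + M - 1) mod M = n + M - 1" unfolding k_def by (rule div_mult_mod_eq)
  moreover have "(n + M - 1) mod M < M" using M by simp
  ultimately have upper: "M * k \<le> n + M - 1" and lower: "n \<le> M * k"
    by (simp_all add: mult.commute)
  with n have "M * M < M * k" by linarith
  then have "M < k" by simp
  have "(M - 1) * k + k = M * k" using M by (cases M) simp_all
  with upper \<open>M < k\<close> have below: "(M - 1) * k < n" by linarith
  have "j * k < n \<longleftrightarrow> j < M" for j
  proof
    assume "j * k < n"
    with lower have "j * k < M * k" by linarith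
    then show "j < M" by simp
  next
    assume "j < M"
    then have "j * k \<le> (M - 1) * k" by (intro mult_right_mono) simp_all
    with below show "j * k < n" by linarith
  qed
  with \<open>M < k\<close> show ?thesis by (intro exI[of _ k]) simp
qed

lemma models_Fp_trunc_if_sat_in_grid:
  assumes p: "1 < p" and M: "0 < M" and n: "M * M < n" and f: "sentence f" "existential f"
    and sat: "sat_in (Fp_tinf_mod_t p) (eval_frac_mod_t p 1 M ` carrier (UP (Fp p)))
      (\<lambda>_. \<zero>\<^bsub>Fp_tinf_mod_t p\<^esub>) f"
  shows "models (Fp_trunc p n) f"
proof -
  obtain k where k: "0 < k" "\<And>j. j * k < n \<longleftrightarrow> j < M" using exists_scale_cutoff[OF M n] by blast
  have n0: "0 < n" using n by simp
  have "sat_in (Fp_tinf_mod_t p) (eval_frac_mod_t p 1 n ` carrier (UP (Fp p)))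
      (\<lambda>_. \<zero>\<^bsub>Fp_tinf_mod_t p\<^esub>) f"
  proof (rule sat_in_transfer_zero[OF eval_frac_mod_t_ring_hom[OF zero_less_one M p]
        eval_frac_mod_t_ring_hom[OF k(1) n0 p] _ _ f(2) sat])
    show "\<forall>x\<in>carrier (UP (Fp p)). (eval_frac_mod_t p 1 M x = \<zero>\<^bsub>Fp_tinf_mod_t p\<^esub>)
        = (eval_frac_mod_t p k n x = \<zero>\<^bsub>Fp_tinf_mod_t p\<^esub>)"
      using eval_frac_mod_t_eq_zero_iff[OF _ M p] eval_frac_mod_t_eq_zero_iff[OF k(1) n0 p] k(2)
      by simp
    show "\<forall>a\<in>eval_frac_mod_t p 1 M ` carrier (UP (Fp p)). \<exists>c\<in>carrier (UP (Fp p)).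
        eval_frac_mod_t p 1 M c = a \<and> eval_frac_mod_t p k n c \<in> eval_frac_mod_t p 1 n ` carrier (UP (Fp p))"
      using eval_frac_mod_t_image_subset[OF k(1) n0 p] by blast
  qed
  then have "sat_in (Fp_trunc p n) (carrier (Fp_trunc p n)) (\<lambda>_. \<zero>\<^bsub>Fp_trunc p n\<^esub>) f"
  proof (rule sat_in_transfer_zero[OF eval_frac_mod_t_ring_hom[OF zero_less_one n0 p] trunc_proj_ring_hom[OF p]
        _ _ f(2), rotated 2])
    show "\<forall>x\<in>carrier (UP (Fp p)). (eval_frac_mod_t p 1 n x = \<zero>\<^bsub>Fp_tinf_mod_t p\<^esub>)
        = (trunc_proj p n x = \<zero>\<^bsub>Fp_trunc p n\<^esub>)"
      using trunc_proj_eq_zero_iff[OF p] eval_frac_mod_t_eq_zero_iff[OF _ n0 p] by simp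
    show "\<forall>a\<in>eval_frac_mod_t p 1 n ` carrier (UP (Fp p)). \<exists>c\<in>carrier (UP (Fp p)).
        eval_frac_mod_t p 1 n c = a \<and> trunc_proj p n c \<in> carrier (Fp_trunc p n)"
      unfolding trunc_proj_surj[symmetric] by blast
  qed
  then show ?thesis using models_iff_sat_in_carrier[OF f Fp_trunc_ring[OF p]] by simp
qed

lemma finite_not_models_Fp_trunc:
  assumes p: "1 < p" and f: "sentence f" "existential f" and m: "models (Fp_tinf_mod_t p) f"
  shows "finite {n. \<not> models (Fp_trunc p n) f}"
proof -
  let ?S = "\<lambda>M. eval_frac_mod_t p 1 M ` carrier (UP (Fp p))"
  have sat: "sat (Fp_tinf_mod_t p) (\<lambda>_. \<zero>\<^bsub>Fp_tinf_mod_t p\<^esub>) f"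
    using m models_iff_sat_zero[OF f(1) Fp_tinf_mod_t_ring[OF p]] by simp
  have "\<exists>M\<in>{M. 0 < M}. sat_in (Fp_tinf_mod_t p) (?S M) (\<lambda>_. \<zero>\<^bsub>Fp_tinf_mod_t p\<^esub>) f"
  proof (rule sat_in_directed_union[where I = "{M. 0 < M}" and S = ?S, OF _ _ _ f(2) sat])
    show "1 \<in> {M :: nat. 0 < M}" by simp
    show "\<exists>M\<in>{M. 0 < M}. y \<in> ?S M" if "y \<in> carrier (Fp_tinf_mod_t p)" for y
      using Fp_tinf_mod_t_carrier_covered[OF p that] by simp
    show "\<exists>K\<in>{M. 0 < M}. ?S M \<union> ?S N \<subseteq> ?S K" if "M \<in> {M. 0 < M}" "N \<in> {M. 0 < M}" for M N
    proof -
      from that have "?S M \<subseteq> ?S (M * N)" "?S N \<subseteq> ?S (M * N)"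
        using eval_frac_mod_t_image_mono[OF _ _ p, of M N] eval_frac_mod_t_image_mono[OF _ _ p, of N M]
        by (simp_all add: mult.commute)
      with that show ?thesis by (intro bexI[of _ "M * N"]) auto
    qed
  qed
  then obtain M where M: "0 < M" "sat_in (Fp_tinf_mod_t p) (?S M) (\<lambda>_. \<zero>\<^bsub>Fp_tinf_mod_t p\<^esub>) f"
    by blast
  have "{n. \<not> models (Fp_trunc p n) f} \<subseteq> {..M * M}"
  proof
    fix n assume "n \<in> {n. \<not> models (Fp_trunc p n) f}"
    then have "\<not> M * M < n" using models_Fp_trunc_if_sat_in_grid[OF p M(1) _ f M(2)] by blast
    then show "n \<in> {..M * M}" by simp
  qed
  then show ?thesis by (rule finite_subset) simp
qed

theorem mainTheorem13:
  fixes p :: nat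
  assumes "Factorial_Ring.prime p"
  shows "asymp_exist_theory (Fp_trunc p) = exist_theory (Fp_tinf_mod_t p)"
proof (intro equalityI subsetI)
  have p: "1 < p" using assms prime_gt_1_nat by blast
  fix f
  show "f \<in> exist_theory (Fp_tinf_mod_t p)" if "f \<in> asymp_exist_theory (Fp_trunc p)"
  proof -
    from that have f: "sentence f" "existential f" and "finite {n. \<not> models (Fp_trunc p n) f}"
      by (auto simp: asymp_exist_theory_def)
    then obtain n where "n \<notin> insert 0 {n. \<not> models (Fp_trunc p n) f}"
      using ex_new_if_finite[OF infinite_UNIV_nat] by blast
    then have "0 < n" "models (Fp_trunc p n) f" by auto
    with f show ?thesis
      using models_Fp_tinf_mod_t_if_models_Fp_trunc[OF p] by (simp add: exist_theory_def)
  qed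
  show "f \<in> asymp_exist_theory (Fp_trunc p)" if "f \<in> exist_theory (Fp_tinf_mod_t p)"
    using that finite_not_models_Fp_trunc[OF p]
    by (simp add: exist_theory_def asymp_exist_theory_def)
qed
end
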